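(* Let $D$ be a square-free integer, let $\mathbb{Z}[\sqrt{D}]$ denote the ring of integers of $\mathbb{Q}(\sqrt{D})$, and let $p$ be a prime integer which is irreducible but not prime in $\mathbb{Z}[\sqrt{D}]$. Let $z\in I_p(D)$ with $\lVert z\rVert=-p^2$. Then $\gcd(z_1,z_2D)=1$, where $z_1,z_2\in\mathbb{Z}$ are such that $z=z_1+z_2\sqrt{D}$ or $z=\frac{z_1+z_2\sqrt{D}}{2}$ (with $z_1,z_2$ odd, $D\equiv 1\pmod 4$).
   Context: $\mathbb{Z}[\sqrt{D}]=\{a+b\sqrt{D}:a,b\in\mathbb{Z}\}$ if $D\equiv 2,3 \pmod 4$ and $\{\frac{a+b\sqrt{D}}{2}:a,b\in\mathbb{Z},a\equiv b \pmod 2\}$ if $D\equiv 1\pmod 4$. $\lVert z\rVert=z\bar z$ is the norm. $I_p(D)$ is the set of all non-unit $z\in\mathbb{Z}[\sqrt{D}]$ such that $z\notin\langle p\rangle$ but there exists $m\notin\langle p\rangle$ with $zm\in\langle p\rangle$. *)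

theory Defs
  imports Complex_Main "HOL-Computational_Algebra.Squarefree"
begin

text \<open>Elements of Q(sqrt D) are represented as pairs (x,y) of rationals, meaning x + y sqrt D.\<close>

definition qmul :: "int \<Rightarrow> rat \<times> rat \<Rightarrow> rat \<times> rat \<Rightarrow> rat \<times> rat" where
  "qmul D z w = (fst z * fst w + of_int D * snd z * snd w, fst z * snd w + snd z * fst w)"

definition OD :: "int \<Rightarrow> (rat \<times> rat) set" where
  "OD D = (if D mod 4 = 1
           then {(of_int a / 2, of_int b / 2) | a b. a mod 2 = b mod 2}
           else {(of_int a, of_int b) | a b. True})"

definition qnorm :: "int \<Rightarrow> rat \<times> rat \<Rightarrow> rat" where
  "qnorm D z = (fst z)^2 - of_int D * (snd z)^2"

definition qunit :: "int \<Rightarrow> rat \<times> rat \<Rightarrow> bool" where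
  "qunit D z \<longleftrightarrow> z \<in> OD D \<and> (\<exists>w \<in> OD D. qmul D z w = (1, 0))"

definition qdvd :: "int \<Rightarrow> rat \<times> rat \<Rightarrow> rat \<times> rat \<Rightarrow> bool" where
  "qdvd D a b \<longleftrightarrow> (\<exists>c \<in> OD D. b = qmul D a c)"

definition pideal :: "int \<Rightarrow> int \<Rightarrow> (rat \<times> rat) set" where
  "pideal D p = {qmul D (of_int p, 0) m | m. m \<in> OD D}"

definition qirreducible :: "int \<Rightarrow> rat \<times> rat \<Rightarrow> bool" where
  "qirreducible D a \<longleftrightarrow> a \<in> OD D \<and> a \<noteq> (0, 0) \<and> \<not> qunit D a \<and>
     (\<forall>x \<in> OD D. \<forall>y \<in> OD D. a = qmul D x y \<longrightarrow> qunit D x \<or> qunit D y)"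

definition qprime :: "int \<Rightarrow> rat \<times> rat \<Rightarrow> bool" where
  "qprime D a \<longleftrightarrow> a \<in> OD D \<and> a \<noteq> (0, 0) \<and> \<not> qunit D a \<and>
     (\<forall>x \<in> OD D. \<forall>y \<in> OD D. qdvd D a (qmul D x y) \<longrightarrow> qdvd D a x \<or> qdvd D a y)"

definition Ip :: "int \<Rightarrow> int \<Rightarrow> (rat \<times> rat) set" where
  "Ip p D = {z \<in> OD D. \<not> qunit D z \<and> z \<notin> pideal D p \<and>
              (\<exists>m \<in> OD D. m \<notin> pideal D p \<and> qmul D z m \<in> pideal D p)}"

end

theory Submission
  imports Defs
begin

text \<open>
  Write \<open>z = (z\<^sub>1 + z\<^sub>2 \<surd>D) / k\<close> with \<open>k \<in> {1, 2}\<close>, so that the norm condition reads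
  \<open>z\<^sub>1\<^sup>2 - D z\<^sub>2\<^sup>2 = -k\<^sup>2 p\<^sup>2\<close>, and \<open>z\<^sub>1\<close> is odd when \<open>k = 2\<close>. A prime \<open>q\<close> dividing both
  \<open>z\<^sub>1\<close> and \<open>z\<^sub>2 D\<close> then divides \<open>k\<^sup>2 p\<^sup>2\<close> but not \<open>k\<close>, hence \<open>q = p\<close>. As \<open>z \<notin> \<langle>p\<rangle>\<close>,
  \<open>p\<close> does not divide \<open>z\<^sub>2\<close>, so \<open>p\<close> divides \<open>D\<close>; but then \<open>p\<^sup>2\<close> divides \<open>D z\<^sub>2\<^sup>2\<close> and
  hence \<open>D\<close>, contradicting squarefreeness.
\<close>

lemma coprime_int_if_no_common_prime_divisor:
  fixes a b :: int
  assumes "\<And>q. prime q \<Longrightarrow> q dvd a \<Longrightarrow> q dvd b \<Longrightarrow> False"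
  shows "coprime a b"
proof (rule coprimeI)
  fix c assume "c dvd a" "c dvd b"
  show "is_unit c"
  proof (rule ccontr)
    assume "\<not> is_unit c"
    then obtain q where "prime q" "q dvd c"
      using prime_factor_int[of c] by auto
    then show False
      using assms \<open>c dvd a\<close> \<open>c dvd b\<close> dvd_trans by blast
  qed
qed

lemma norm_form_coprime:
  fixes D p z1 z2 c :: int
  assumes sqfree: "squarefree D" and p: "prime p"
    and norm: "z1\<^sup>2 - D * z2\<^sup>2 = c * p\<^sup>2"
    and "coprime z1 c"
    and not_both: "\<not> (p dvd z1 \<and> p dvd z2)"
  shows "coprime z1 (z2 * D)"
proof (rule coprime_int_if_no_common_prime_divisor)
  fix q assume q: "prime q" "q dvd z1" "q dvd z2 * D"
  have "q dvd z1\<^sup>2" using q(2) by (simp add: power2_eq_square)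
  moreover have "q dvd D * z2\<^sup>2"
    using q(3) by (metis dvd_mult2 mult.commute mult.assoc power2_eq_square)
  ultimately have "q dvd z1\<^sup>2 - D * z2\<^sup>2" by (rule dvd_diff)
  then have "q dvd c * p\<^sup>2" by (simp only: norm)
  moreover have "\<not> q dvd c"
    using \<open>coprime z1 c\<close> q coprime_common_divisor not_prime_unit by blast
  ultimately have "q dvd p"
    using q(1) prime_dvd_mult_iff prime_dvd_power by blast
  then have "q = p" using q(1) p primes_dvd_imp_eq by blast
  with not_both q have "\<not> p dvd z2" by blast
  with q \<open>q = p\<close> have "p dvd D" by (simp add: prime_dvd_mult_iff)
  have "p\<^sup>2 dvd D * z2\<^sup>2"
  proof -
    have "D * z2\<^sup>2 = z1\<^sup>2 - c * p\<^sup>2" using norm by simp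
    moreover have "p\<^sup>2 dvd z1\<^sup>2" using q \<open>q = p\<close> by simp
    ultimately show ?thesis by simp
  qed
  moreover have "coprime (p\<^sup>2) (z2\<^sup>2)"
    using p \<open>\<not> p dvd z2\<close> by (simp add: prime_imp_coprime)
  ultimately have "p\<^sup>2 dvd D" by (simp add: coprime_dvd_mult_left_iff)
  then show False using sqfree p squarefreeD not_prime_unit by blast
qed

lemma qmul_of_int_left: "qmul D (of_int p, 0) (x, y) = (of_int p * x, of_int p * y)"
  by (simp add: qmul_def)

lemma int_pair_in_OD: "(of_int a, of_int b) \<in> OD D"
proof (cases "D mod 4 = 1")
  case True
  have "(of_int a :: rat, of_int b :: rat) = (of_int (2 * a) / 2, of_int (2 * b) / 2)" by simp
  moreover have "(2 * a) mod 2 = (2 * b) mod 2" by simp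
  ultimately show ?thesis unfolding OD_def if_P[OF True] by blast
qed (auto simp: OD_def)

lemma half_odd_pair_in_OD:
  assumes "D mod 4 = 1" "odd a" "odd b"
  shows "(of_int a / 2, of_int b / 2) \<in> OD D"
  using assms unfolding OD_def by (auto simp: odd_iff_mod_2_eq_one)

lemma int_pair_in_pideal:
  assumes "p dvd z1" "p dvd z2"
  shows "(of_int z1, of_int z2) \<in> pideal D p"
proof -
  obtain a b where "z1 = p * a" "z2 = p * b" using assms by (auto elim!: dvdE)
  then have "(of_int z1, of_int z2) = qmul D (of_int p, 0) (of_int a, of_int b)"
    by (simp add: qmul_of_int_left)
  then show ?thesis unfolding pideal_def using int_pair_in_OD by blast
qed

lemma half_pair_in_pideal:
  assumes "D mod 4 = 1" "odd z1" "odd z2" "p dvd z1" "p dvd z2"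
  shows "(of_int z1 / 2, of_int z2 / 2) \<in> pideal D p"
proof -
  obtain a b where ab: "z1 = p * a" "z2 = p * b" using assms by (auto elim!: dvdE)
  then have "(of_int z1 / 2, of_int z2 / 2) = qmul D (of_int p, 0) (of_int a / 2, of_int b / 2)"
    by (simp add: qmul_of_int_left)
  moreover have "odd a" "odd b" using ab assms by auto
  ultimately show ?thesis
    unfolding pideal_def using half_odd_pair_in_OD assms(1) by blast
qed

lemma qnorm_int_pair: "qnorm D (of_int z1, of_int z2) = of_int (z1\<^sup>2 - D * z2\<^sup>2)"
  by (simp add: qnorm_def)

lemma qnorm_half_pair: "qnorm D (of_int z1 / 2, of_int z2 / 2) = of_int (z1\<^sup>2 - D * z2\<^sup>2) / 4"
  by (simp add: qnorm_def field_simps power2_eq_square)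

theorem lemma3p4:
  fixes D p :: int and z :: "rat \<times> rat"
  assumes "squarefree D" and "D \<noteq> 1"
    and "prime p"
    and "qirreducible D (of_int p, 0)" and "\<not> qprime D (of_int p, 0)"
    and "z \<in> Ip p D"
    and "qnorm D z = - ((of_int p)^2)"
  shows "\<forall>z1 z2 :: int.
           (z = (of_int z1, of_int z2) \<or>
            (D mod 4 = 1 \<and> odd z1 \<and> odd z2 \<and> z = (of_int z1 / 2, of_int z2 / 2)))
           \<longrightarrow> gcd z1 (z2 * D) = 1"
proof (intro allI impI)
  fix z1 z2 :: int
  assume "z = (of_int z1, of_int z2) \<or>
    (D mod 4 = 1 \<and> odd z1 \<and> odd z2 \<and> z = (of_int z1 / 2, of_int z2 / 2))"
  then consider (int) "z = (of_int z1, of_int z2)"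
    | (half) "D mod 4 = 1" "odd z1" "odd z2" "z = (of_int z1 / 2, of_int z2 / 2)"
    by blast
  then have "coprime z1 (z2 * D)"
  proof cases
    case int
    then have "(of_int (z1\<^sup>2 - D * z2\<^sup>2) :: rat) = of_int (-1 * p\<^sup>2)"
      using assms(7) qnorm_int_pair[of D z1 z2] by simp
    then have "z1\<^sup>2 - D * z2\<^sup>2 = -1 * p\<^sup>2" by (simp only: of_int_eq_iff)
    moreover have "coprime z1 (-1)" by simp
    moreover have "\<not> (p dvd z1 \<and> p dvd z2)"
      using assms(6) int int_pair_in_pideal by (auto simp: Ip_def)
    ultimately show ?thesis by (rule norm_form_coprime[OF assms(1,3)])
  next
    case half
    then have "(of_int (z1\<^sup>2 - D * z2\<^sup>2) :: rat) = of_int (-4 * p\<^sup>2)"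
      using assms(7) qnorm_half_pair[of D z1 z2] by simp
    then have "z1\<^sup>2 - D * z2\<^sup>2 = -4 * p\<^sup>2" by (simp only: of_int_eq_iff)
    moreover have "coprime z1 (-4)"
      using half coprime_power_right_iff[of z1 2 2] by simp
    moreover have "\<not> (p dvd z1 \<and> p dvd z2)"
      using assms(6) half half_pair_in_pideal by (auto simp: Ip_def)
    ultimately show ?thesis by (rule norm_form_coprime[OF assms(1,3)])
  qed
  then show "gcd z1 (z2 * D) = 1" by simp
qed

end
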